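(* Let $\alpha\in(0,1)$ and define $\|F\|=\max\{\|F\|_\infty,|\int_{-\infty}^0x\,dF(x)|\}$. Then for all distribution functions $F,G$ on $\mathbb R$ with $\|F\|<\infty$ and $\|G\|<\infty$, $$0\le\mathrm{CVaR}_\alpha(G)-\mathrm{CVaR}_\alpha(F)+\frac1\alpha\int_{-\infty}^{\mathrm{VaR}_\alpha(F)}\bigl(G(y)-F(y)\bigr)\,dy\le\frac1\alpha\|F-G\|\,\bigl|\mathrm{VaR}_\alpha(F)-\mathrm{VaR}_\alpha(G)\bigr|.$$
   Context: $\|F\|_\infty=\sup_x|F(x)|$. For a distribution function $F$, $\mathrm{VaR}_\alpha(F)=\inf\{y\in\mathbb R:F(y)\ge\alpha\}$ and $\mathrm{CVaR}_\alpha(F)=\mathrm{VaR}_\alpha(F)-\frac1\alpha\int_{-\infty}^{\mathrm{VaR}_\alpha(F)}F(y)\,dy$. *)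

theory Defs
  imports "HOL-Analysis.Analysis"
begin

definition distribution_function :: "(real \<Rightarrow> real) \<Rightarrow> bool" where
  "distribution_function F \<longleftrightarrow>
     mono F \<and> (\<forall>x. continuous (at_right x) F) \<and>
     (F \<longlongrightarrow> 0) at_bot \<and> (F \<longlongrightarrow> 1) at_top"

definition neg_part_mean :: "(real \<Rightarrow> real) \<Rightarrow> real" where
  "neg_part_mean F = (LINT x:{..0}|interval_measure F. x)"

(* |int_{(-inf,0]} x dF(x)| < infinity  (integrand is nonpositive) *)
definition neg_part_mean_finite :: "(real \<Rightarrow> real) \<Rightarrow> bool" where
  "neg_part_mean_finite F \<longleftrightarrow>
     (\<integral>\<^sup>+ x. indicator {..0} x * ennreal (- x) \<partial>interval_measure F) < \<infinity>"

definition sup_norm :: "(real \<Rightarrow> real) \<Rightarrow> real" where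
  "sup_norm H = (SUP x. \<bar>H x\<bar>)"

(* ||F - G|| = max { ||F - G||_inf , | int_{-inf}^0 x d(F - G)(x) | },
   the Stieltjes integral w.r.t. F - G being the difference of the integrals. *)
definition diff_norm :: "(real \<Rightarrow> real) \<Rightarrow> (real \<Rightarrow> real) \<Rightarrow> real" where
  "diff_norm F G = max (sup_norm (\<lambda>x. F x - G x)) \<bar>neg_part_mean F - neg_part_mean G\<bar>"

definition VaR :: "real \<Rightarrow> (real \<Rightarrow> real) \<Rightarrow> real" where
  "VaR \<alpha> F = Inf {y. F y \<ge> \<alpha>}"

definition CVaR :: "real \<Rightarrow> (real \<Rightarrow> real) \<Rightarrow> real" where
  "CVaR \<alpha> F = VaR \<alpha> F - (1 / \<alpha>) * (LINT y:{..VaR \<alpha> F}|lborel. F y)"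

end

theory Submission
  imports Defs "HOL-Probability.Distribution_Functions"
begin

text \<open>
  Put \<open>v = VaR\<^sub>\<alpha>(F)\<close> and \<open>w = VaR\<^sub>\<alpha>(G)\<close>. Unfolding CVaR, \<open>\<alpha>\<close> times the middle expression
  equals \<open>\<alpha> (w - v) - \<integral>\<^sub>v\<^sup>w G\<close>, i.e. the integral of \<open>\<alpha> - G\<close> over \<open>[v, w]\<close> if \<open>v \<le> w\<close>, and
  of \<open>G - \<alpha>\<close> over \<open>[w, v]\<close> otherwise. Between the two quantiles one of \<open>F, G\<close> is below \<open>\<alpha>\<close>
  and the other is at least \<open>\<alpha>\<close>, so this integrand is nonnegative and bounded by
  \<open>\<bar>F - G\<bar> \<le> \<parallel>F - G\<parallel>\<close>. The moment condition on \<open>F\<close> and \<open>G\<close> only serves to make their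
  integrals over half-lines \<open>(-\<infinity>, t]\<close> finite, by Tonelli.
\<close>

lemma distribution_function_mono:
  "distribution_function F \<Longrightarrow> x \<le> y \<Longrightarrow> F x \<le> F y"
  unfolding distribution_function_def mono_def by blast

lemma distribution_function_nonneg:
  assumes "distribution_function F"
  shows "0 \<le> F x"
proof -
  have "(F \<longlongrightarrow> 0) at_bot" using assms unfolding distribution_function_def by blast
  then show ?thesis
    by (rule tendsto_upperbound)
      (auto simp: eventually_at_bot_linorder intro: distribution_function_mono[OF assms])
qed

lemma distribution_function_le_1:
  assumes "distribution_function F"
  shows "F x \<le> 1"
proof -
  have "(F \<longlongrightarrow> 1) at_top" using assms unfolding distribution_function_def by blast
  then show ?thesis
    by (rule tendsto_lowerbound)
      (auto simp: eventually_at_top_linorder intro: distribution_function_mono[OF assms])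
qed

lemma distribution_function_borel_measurable:
  "distribution_function F \<Longrightarrow> F \<in> borel_measurable borel"
  by (rule borel_measurable_mono) (simp add: distribution_function_def)

lemma abs_diff_le_diff_norm:
  assumes "distribution_function F" "distribution_function G"
  shows "\<bar>F y - G y\<bar> \<le> diff_norm F G"
proof -
  have "bdd_above (range (\<lambda>x. \<bar>F x - G x\<bar>))"
    using distribution_function_nonneg[OF assms(1)] distribution_function_le_1[OF assms(1)]
      distribution_function_nonneg[OF assms(2)] distribution_function_le_1[OF assms(2)]
    by (intro bdd_aboveI2[where M = 1]) (smt (verit))
  then have "\<bar>F y - G y\<bar> \<le> sup_norm (\<lambda>x. F x - G x)"
    unfolding sup_norm_def by (rule cSUP_upper[OF UNIV_I])
  then show ?thesis unfolding diff_norm_def by simp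
qed

text \<open>Tonelli on the region \<open>x \<le> y \<le> 0\<close>, integrating \<open>dy\<close> or \<open>dF(x)\<close> first.\<close>

lemma nn_integral_distribution_function_atMost_0:
  assumes "distribution_function F"
  shows "(\<integral>\<^sup>+ y. ennreal (indicator {..0} y * F y) \<partial>lborel)
       = (\<integral>\<^sup>+ x. indicator {..0} x * ennreal (- x) \<partial>interval_measure F)"
proof -
  let ?M = "interval_measure F"
  have mono: "\<And>x y. x \<le> y \<Longrightarrow> F x \<le> F y"
    and right_cont: "\<And>a. continuous (at_right a) F"
    and lim_bot: "(F \<longlongrightarrow> 0) at_bot" and lim_top: "(F \<longlongrightarrow> 1) at_top"
    using assms unfolding distribution_function_def mono_def by blast+
  interpret finite_borel_measure ?M
    by (rule finite_borel_measure_interval_measure[where m = 1]) (use mono right_cont lim_bot lim_top in auto)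
  interpret pair_sigma_finite ?M lborel
    by unfold_locales
  define f :: "real \<Rightarrow> real \<Rightarrow> ennreal" where "f x y = indicator {..0} y * indicator {..y} x" for x y
  have "case_prod f \<in> borel_measurable (?M \<Otimes>\<^sub>M lborel)"
    unfolding f_def indicator_def atMost_iff by measurable
  then have "(\<integral>\<^sup>+ y. (\<integral>\<^sup>+ x. f x y \<partial>?M) \<partial>lborel) = (\<integral>\<^sup>+ x. (\<integral>\<^sup>+ y. f x y \<partial>lborel) \<partial>?M)"
    by (rule Fubini')
  moreover have "(\<integral>\<^sup>+ x. f x y \<partial>?M) = ennreal (indicator {..0} y * F y)" for y
  proof -
    have "(\<integral>\<^sup>+ x. f x y \<partial>?M) = indicator {..0} y * emeasure ?M {..y}"
      unfolding f_def by (subst nn_integral_cmult) auto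
    then show ?thesis
      by (simp add: emeasure_interval_measure_Iic[OF mono right_cont lim_bot] indicator_def)
  qed
  moreover have "(\<integral>\<^sup>+ y. f x y \<partial>lborel) = indicator {..0} x * ennreal (- x)" for x
  proof -
    have "(\<integral>\<^sup>+ y. f x y \<partial>lborel) = (\<integral>\<^sup>+ y. indicator {x..0} y \<partial>lborel)"
      unfolding f_def by (intro nn_integral_cong) (auto split: split_indicator)
    also have "\<dots> = emeasure lborel {x..0}"
      by simp
    finally show ?thesis
      by (cases "x \<le> 0") (auto simp: indicator_def)
  qed
  ultimately show ?thesis by simp
qed

lemma set_integrable_distribution_function_atMost:
  assumes "distribution_function F" "neg_part_mean_finite F"
  shows "set_integrable lborel {..t} F"
proof -
  have "set_integrable lborel {..0} F"
    unfolding set_integrable_def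
  proof (rule integrableI_bounded)
    show "(\<lambda>x. indicator {..0} x *\<^sub>R F x) \<in> borel_measurable lborel"
      using distribution_function_borel_measurable[OF assms(1)] by measurable
    show "(\<integral>\<^sup>+ x. ennreal (norm (indicator {..0::real} x *\<^sub>R F x)) \<partial>lborel) < \<infinity>"
      using assms nn_integral_distribution_function_atMost_0[OF assms(1)]
      by (simp add: neg_part_mean_finite_def abs_mult distribution_function_nonneg)
  qed
  moreover have "set_integrable lborel {0..\<bar>t\<bar>} F"
    unfolding set_integrable_def
    by (rule integrableI_bounded_set_indicator[where B = 1])
      (use assms distribution_function_borel_measurable distribution_function_nonneg
         distribution_function_le_1 in auto)
  ultimately have "set_integrable lborel ({..0} \<union> {0..\<bar>t\<bar>}) F"
    by (rule set_integrable_Un) auto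
  then show ?thesis by (rule set_integrable_subset) auto
qed

lemma VaR_superlevel_set:
  assumes "distribution_function F" "0 < \<alpha>" "\<alpha> < 1"
  shows "{y. \<alpha> \<le> F y} \<noteq> {}" "bdd_below {y. \<alpha> \<le> F y}"
proof -
  have "eventually (\<lambda>y. \<alpha> < F y) at_top"
    using assms by (intro order_tendstoD(1)[of _ 1]) (auto simp: distribution_function_def)
  then show "{y. \<alpha> \<le> F y} \<noteq> {}"
    by (auto simp: eventually_at_top_linorder intro: less_imp_le)
  have "eventually (\<lambda>y. F y < \<alpha>) at_bot"
    using assms by (intro order_tendstoD(2)[of _ 0]) (auto simp: distribution_function_def)
  then obtain b where "\<And>y. y \<le> b \<Longrightarrow> F y < \<alpha>"
    by (auto simp: eventually_at_bot_linorder)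
  then show "bdd_below {y. \<alpha> \<le> F y}"
    by (intro bdd_belowI[of _ b]) (metis linorder_le_cases mem_Collect_eq not_less)
qed

lemma le_distribution_function_VaR:
  assumes "distribution_function F" "0 < \<alpha>" "\<alpha> < 1"
  shows "\<alpha> \<le> F (VaR \<alpha> F)"
proof -
  note S = VaR_superlevel_set[OF assms]
  have "eventually (\<lambda>y. \<alpha> \<le> F y) (at_right (VaR \<alpha> F))"
    unfolding eventually_at_right_field
  proof (intro exI[of _ "VaR \<alpha> F + 1"] conjI allI impI)
    fix y assume "VaR \<alpha> F < y"
    then obtain s where "\<alpha> \<le> F s" "s < y"
      using cInf_less_iff[OF S] by (auto simp: VaR_def)
    then show "\<alpha> \<le> F y"
      using distribution_function_mono[OF assms(1), of s y] by simp
  qed simp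
  moreover have "(F \<longlongrightarrow> F (VaR \<alpha> F)) (at_right (VaR \<alpha> F))"
    using assms(1) by (simp add: distribution_function_def continuous_within)
  ultimately show ?thesis
    by (intro tendsto_lowerbound[of F]) (auto simp: trivial_limit_at_right_real)
qed

lemma VaR_le_iff:
  assumes "distribution_function F" "0 < \<alpha>" "\<alpha> < 1"
  shows "VaR \<alpha> F \<le> y \<longleftrightarrow> \<alpha> \<le> F y"
proof
  assume "VaR \<alpha> F \<le> y"
  then show "\<alpha> \<le> F y"
    using le_distribution_function_VaR[OF assms] distribution_function_mono[OF assms(1)]
    by (meson order_trans)
next
  assume "\<alpha> \<le> F y"
  then show "VaR \<alpha> F \<le> y"
    unfolding VaR_def by (intro cInf_lower VaR_superlevel_set[OF assms]) simp
qed

lemma set_integral_atMost_diff: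
  fixes f :: "real \<Rightarrow> real"
  assumes "p \<le> q" "set_integrable lborel {..q} f"
  shows "(LINT y:{..q}|lborel. f y) - (LINT y:{..p}|lborel. f y) = (LINT y:{p<..<q}|lborel. f y)"
proof -
  have "(LINT y:{..q}|lborel. f y) = (LINT y:{..p} \<union> {p<..<q}|lborel. f y)"
    by (rule set_integral_discrete_difference[where X = "{q}"]) (use assms in auto)
  also have "\<dots> = (LINT y:{..p}|lborel. f y) + (LINT y:{p<..<q}|lborel. f y)"
    by (rule set_integral_Un) (auto intro: set_integrable_subset[OF assms(2)] simp: assms)
  finally show ?thesis by simp
qed

lemma set_integrable_const_Ioo: "set_integrable lborel {p<..<q::real} (\<lambda>_. c :: real)"
  unfolding set_integrable_def using emeasure_bounded_finite[of "{p<..<q}"]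
  by (intro integrableI_bounded_set_indicator[where B = "\<bar>c\<bar>"]) auto

lemma set_integral_Ioo_bounds:
  fixes f :: "real \<Rightarrow> real"
  assumes "p \<le> q" "set_integrable lborel {p<..<q} f"
    and "\<And>y. p < y \<Longrightarrow> y < q \<Longrightarrow> a \<le> f y" "\<And>y. p < y \<Longrightarrow> y < q \<Longrightarrow> f y \<le> b"
  shows "a * (q - p) \<le> (LINT y:{p<..<q}|lborel. f y)" "(LINT y:{p<..<q}|lborel. f y) \<le> b * (q - p)"
proof -
  have const: "(LINT y:{p<..<q}|lborel. c) = c * (q - p)" for c :: real
    using assms(1) by (subst set_integral_const) auto
  show "a * (q - p) \<le> (LINT y:{p<..<q}|lborel. f y)"
    unfolding const[symmetric]
    by (rule set_integral_mono[OF set_integrable_const_Ioo assms(2)]) (use assms(3) in auto)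
  show "(LINT y:{p<..<q}|lborel. f y) \<le> b * (q - p)"
    unfolding const[symmetric]
    by (rule set_integral_mono[OF assms(2) set_integrable_const_Ioo]) (use assms(4) in auto)
qed

lemma CVaR_diff_plus_integral_eq:
  assumes "\<alpha> \<noteq> 0"
    and "set_integrable lborel {..VaR \<alpha> F} F" "set_integrable lborel {..VaR \<alpha> F} G"
  shows "\<alpha> * (CVaR \<alpha> G - CVaR \<alpha> F + (1 / \<alpha>) * (LINT y:{..VaR \<alpha> F}|lborel. G y - F y))
       = \<alpha> * (VaR \<alpha> G - VaR \<alpha> F)
         - ((LINT y:{..VaR \<alpha> G}|lborel. G y) - (LINT y:{..VaR \<alpha> F}|lborel. G y))"
  using assms by (simp add: CVaR_def set_integral_diff(2) field_simps)

lemma VaR_gap_integral_bounds: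
  assumes "0 < \<alpha>" "\<alpha> < 1" "distribution_function F" "distribution_function G"
    and int_G: "\<And>t. set_integrable lborel {..t} G"
  defines "J \<equiv> (LINT y:{..VaR \<alpha> G}|lborel. G y) - (LINT y:{..VaR \<alpha> F}|lborel. G y)"
  shows "0 \<le> \<alpha> * (VaR \<alpha> G - VaR \<alpha> F) - J"
    and "\<alpha> * (VaR \<alpha> G - VaR \<alpha> F) - J \<le> diff_norm F G * \<bar>VaR \<alpha> F - VaR \<alpha> G\<bar>"
proof -
  define v w D where "v = VaR \<alpha> F" and "w = VaR \<alpha> G" and "D = diff_norm F G"
  have int_G_Ioo: "set_integrable lborel {p<..<q} G" for p q
    by (rule set_integrable_subset[OF int_G[of q]]) auto
  note F_ge = VaR_le_iff[OF assms(3,1,2), folded v_def]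
  note G_ge = VaR_le_iff[OF assms(4,1,2), folded w_def]
  note F_G_close = abs_diff_le_diff_norm[OF assms(3,4), folded D_def]
  have "0 \<le> \<alpha> * (w - v) - J \<and> \<alpha> * (w - v) - J \<le> D * \<bar>v - w\<bar>"
  proof (cases "v \<le> w")
    case True
    have "\<alpha> - D \<le> G y" "G y \<le> \<alpha>" if "v < y" "y < w" for y
      using F_ge[of y] G_ge[of y] F_G_close[of y] that by auto
    from set_integral_Ioo_bounds[OF True int_G_Ioo this] show ?thesis
      using True set_integral_atMost_diff[OF True int_G] by (simp add: J_def v_def w_def algebra_simps)
  next
    case False
    then have "w \<le> v" by simp
    have "\<alpha> \<le> G y" "G y \<le> \<alpha> + D" if "w < y" "y < v" for y
      using F_ge[of y] G_ge[of y] F_G_close[of y] that by auto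
    from set_integral_Ioo_bounds[OF \<open>w \<le> v\<close> int_G_Ioo this] show ?thesis
      using False set_integral_atMost_diff[OF \<open>w \<le> v\<close> int_G]
      by (simp add: J_def v_def w_def algebra_simps)
  qed
  then show "0 \<le> \<alpha> * (VaR \<alpha> G - VaR \<alpha> F) - J"
    and "\<alpha> * (VaR \<alpha> G - VaR \<alpha> F) - J \<le> diff_norm F G * \<bar>VaR \<alpha> F - VaR \<alpha> G\<bar>"
    unfolding v_def w_def D_def by auto
qed

theorem lemma27:
  fixes \<alpha> :: real and F G :: "real \<Rightarrow> real"
  assumes "0 < \<alpha>" "\<alpha> < 1"
    and "distribution_function F" "distribution_function G"
    and "neg_part_mean_finite F" "neg_part_mean_finite G"
  shows "0 \<le> CVaR \<alpha> G - CVaR \<alpha> F + (1 / \<alpha>) * (LINT y:{..VaR \<alpha> F}|lborel. G y - F y)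
         \<and> CVaR \<alpha> G - CVaR \<alpha> F + (1 / \<alpha>) * (LINT y:{..VaR \<alpha> F}|lborel. G y - F y)
           \<le> (1 / \<alpha>) * diff_norm F G * \<bar>VaR \<alpha> F - VaR \<alpha> G\<bar>"
proof -
  define E where "E = CVaR \<alpha> G - CVaR \<alpha> F + (1 / \<alpha>) * (LINT y:{..VaR \<alpha> F}|lborel. G y - F y)"
  note int_F = set_integrable_distribution_function_atMost[OF assms(3,5)]
  note int_G = set_integrable_distribution_function_atMost[OF assms(4,6)]
  have "\<alpha> * E = \<alpha> * (VaR \<alpha> G - VaR \<alpha> F)
      - ((LINT y:{..VaR \<alpha> G}|lborel. G y) - (LINT y:{..VaR \<alpha> F}|lborel. G y))"
    unfolding E_def using assms(1) int_F int_G by (intro CVaR_diff_plus_integral_eq) auto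
  with VaR_gap_integral_bounds[OF assms(1-4) int_G]
  have "0 \<le> \<alpha> * E" "\<alpha> * E \<le> diff_norm F G * \<bar>VaR \<alpha> F - VaR \<alpha> G\<bar>"
    by simp_all
  with assms(1) show ?thesis
    unfolding E_def[symmetric] by (simp add: zero_le_mult_iff field_simps)
qed

end
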